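(* The closed-loop SMP system $x_{t+1}=(A_t(\theta_t)-B_t(\theta_t)K)x_t$ is exponentially robustly mean-square stable with rate $\beta\in(0,1)$ if and only if its expanded system $\tilde x_{t+1}=\mathcal{C}(F(\tilde\theta_t,K))\tilde x_t$ is exponentially robustly stable with rate $\tilde\beta\in(0,1)$ satisfying $\tilde\beta=\beta^2$.
   Context: Let $n,m,d_\theta$ be positive integers and $\mathbb{S}_\theta\subset\mathbb{R}^{d_\theta}$. Consider $x_{t+1}=A_t(\theta_t)x_t+B_t(\theta_t)u_t$, $t=0,1,2,\dots$, with $x_t\in\mathbb{R}^n$, $u_t\in\mathbb{R}^m$, deterministic $x_0$, uncertain $\theta_t\in\mathbb{S}_\theta$. The random vector $v_t(\theta_t):=\mathrm{vec}([A_t(\theta_t),B_t(\theta_t)])\in\mathbb{R}^{n(n+m)}$ has a Lebesgue-measurable conditional density $p(v_t\mid\theta_t)$, and for every $s\ge1$ the conditional density of $(v_0,\dots,v_s)$ given $(\theta_0,\theta_1,\dots)$ is $\prod_{t=0}^sp(v_t\mid\theta_t)$; $\mathrm{E}[\cdot|_{\theta_\bullet}]$ is conditional expectation given $(\theta_0,\theta_1,\dots)$. $\mathrm{vec}$ stacks columns; $\mathrm{vech}(X)$ stacks columnwise the entries on and below the diagonal. $\mathbb{P}_N:=\{\varphi\in\mathbb{R}^N:\varphi_k\ge0,\sum_k\varphi_k=1\}$. The system is SMP: there exist $N$, symmetric $M^{(1)},\dots,M^{(N)}\in\mathbb{R}^{n(n+m)\times n(n+m)}$, and $\phi:\mathbb{S}_\theta\to\mathbb{P}_N$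 with $\mathrm{E}[v_tv_t^\top|_{\theta_\bullet}]=\sum_k[\phi(\theta_t)]_kM^{(k)}$ for all $t$ and all sequences in $\mathbb{S}_\theta$. It is TI if $\theta_t=\theta$ is constant in $t$ (then parameter sequences below are constant), TV otherwise. For $K\in\mathbb{R}^{m\times n}$ the closed loop is $x_{t+1}=(A_t(\theta_t)-B_t(\theta_t)K)x_t$. It is exponentially robustly mean-square stable (with rate $\beta$) if there exist $\alpha\in(0,\infty)$, $\beta\in(0,1)$ with $\sqrt{\mathrm{E}[\|x_t\|^2|_{\theta_\bullet}]}\le\alpha\|x_0\|\beta^t$ for all $x_0\in\mathbb{R}^n$, all $\theta_0,\theta_1,\dots\in\mathbb{S}_\theta$, and all $t$. Expanded system: $\tilde n=n(n+1)/2$; $E_e\in\mathbb{R}^{\tilde n\times n^2}$ with $E_e\mathrm{vec}(X)=\mathrm{vech}(X)$ for all $X$; $D\in\mathbb{R}^{n^2\times\tilde n}$ with $D\mathrm{vech}(Y)=\mathrm{vec}(Y)$ for symmetric $Y$; $\mathcal{C}(Y):=E_eYD$. With blocks $M^{(k)}_{i,j}\in\mathbb{R}^{n\times n}$ ($i,j\le n+m$) of $M^{(k)}$: column $n(j-1)+i$ of $F^{(k)}_{aa}$ is $\mathrm{vec}(M^{(k)}_{i,j})$; column $m(j-1)+i'$ of $F^{(k)}_{ab}$ is $\mathrm{vec}(M^{(k)}_{n+i',j})$; column $n(j'-1)+i$ of $F^{(k)}_{ba}$ is $\mathrm{vec}(M^{(k)}_{i,n+j'})$; column $m(j'-1)+i'$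 of $F^{(k)}_{bb}$ is $\mathrm{vec}(M^{(k)}_{n+i',n+j'})$ ($i,j\le n$, $i',j'\le m$). $F^{(k)}(K):=F^{(k)}_{aa}-F^{(k)}_{ab}(I_n\otimes K)-F^{(k)}_{ba}(K\otimes I_n)+F^{(k)}_{bb}(K\otimes K)$, $F(\tilde\theta,K):=\sum_k[\tilde\theta]_kF^{(k)}(K)$. Expanded system: $\tilde x_{t+1}=\mathcal{C}(F(\tilde\theta_t,K))\tilde x_t$, $\tilde x_t\in\mathbb{R}^{\tilde n}$, $\tilde\theta_t\in\tilde{\mathbb{S}}:=\{\phi(\theta):\theta\in\mathbb{S}_\theta\}$; TI/TV as the SMP system. It is exponentially robustly stable (with rate $\tilde\beta$) if there exist $\tilde\alpha\in(0,\infty)$, $\tilde\beta\in(0,1)$ with $\|\tilde x_t\|\le\tilde\alpha\|\tilde x_0\|\tilde\beta^t$ for all $\tilde x_0$, all $\tilde\theta_0,\tilde\theta_1,\dots\in\tilde{\mathbb{S}}$, and all $t$. *)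

theory Defs
  imports "HOL-Probability.Probability"
begin

text \<open>Conventions: vectors in R^k are functions nat => real (only the entries with
index < k matter), matrices are functions nat => nat => real with explicit
dimensions; all indices are 0-based.  Column stacking: vec(X) at index r + rows*c
is X r c.\<close>

type_synonym rmat = "nat \<Rightarrow> nat \<Rightarrow> real"
type_synonym rvec = "nat \<Rightarrow> real"

definition enorm :: "nat \<Rightarrow> rvec \<Rightarrow> real" where
  "enorm k x = sqrt (\<Sum>i<k. (x i)\<^sup>2)"

definition mmul :: "nat \<Rightarrow> rmat \<Rightarrow> rmat \<Rightarrow> rmat" where
  "mmul q A B = (\<lambda>i j. \<Sum>l<q. A i l * B l j)"

definition mvmul :: "nat \<Rightarrow> rmat \<Rightarrow> rvec \<Rightarrow> rvec" where
  "mvmul q A x = (\<lambda>i. \<Sum>l<q. A i l * x l)"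

definition idm :: rmat where
  "idm = (\<lambda>i j. if i = j then 1 else 0)"

definition kron :: "nat \<Rightarrow> nat \<Rightarrow> rmat \<Rightarrow> rmat \<Rightarrow> rmat" where
  "kron r s A B = (\<lambda>i j. A (i div r) (j div s) * B (i mod r) (j mod s))"

definition LebR :: "nat \<Rightarrow> rvec measure" where
  "LebR N = completion (PiM {..<N} (\<lambda>_. lborel))"

text \<open>v = vec([A,B]) with A n x n, B n x m.\<close>
definition Amat :: "nat \<Rightarrow> rvec \<Rightarrow> rmat" where
  "Amat n v = (\<lambda>r c. v (r + n * c))"

definition Bmat :: "nat \<Rightarrow> rvec \<Rightarrow> rmat" where
  "Bmat n v = (\<lambda>r c. v (r + n * (n + c)))"

definition cl_step :: "nat \<Rightarrow> nat \<Rightarrow> rmat \<Rightarrow> rvec \<Rightarrow> rvec \<Rightarrow> rvec" where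
  "cl_step n m K v x = (\<lambda>r. \<Sum>c<n. (Amat n v r c - (\<Sum>j<m. Bmat n v r j * K j c)) * x c)"

primrec traj :: "nat \<Rightarrow> nat \<Rightarrow> rmat \<Rightarrow> rvec \<Rightarrow> (nat \<Rightarrow> rvec) \<Rightarrow> nat \<Rightarrow> rvec" where
  "traj n m K x0 vs 0 = x0"
| "traj n m K x0 vs (Suc t) = cl_step n m K (vs t) (traj n m K x0 vs t)"

text \<open>Conditional distribution of v_t given theta_t = th, with density p th.\<close>
definition vdist :: "nat \<Rightarrow> nat \<Rightarrow> ('p \<Rightarrow> rvec \<Rightarrow> real) \<Rightarrow> 'p \<Rightarrow> rvec measure" where
  "vdist n m p th = density (LebR (n * (n + m))) (\<lambda>v. ennreal (p th v))"

text \<open>Admissible parameter sequences: constant (TI) or arbitrary (TV).\<close>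
definition param_seqs :: "bool \<Rightarrow> 'p set \<Rightarrow> (nat \<Rightarrow> 'p) set" where
  "param_seqs ti S = (if ti then {th. \<exists>c\<in>S. \<forall>t. th t = c} else {th. \<forall>t. th t \<in> S})"

definition is_SMP :: "nat \<Rightarrow> nat \<Rightarrow> 'p set \<Rightarrow> ('p \<Rightarrow> rvec \<Rightarrow> real) \<Rightarrow> nat
      \<Rightarrow> (nat \<Rightarrow> rmat) \<Rightarrow> ('p \<Rightarrow> nat \<Rightarrow> real) \<Rightarrow> bool" where
  "is_SMP n m S p N Ms phi \<longleftrightarrow>
     (\<forall>k<N. \<forall>i<n*(n+m). \<forall>j<n*(n+m). Ms k i j = Ms k j i) \<and>
     (\<forall>th\<in>S. (\<forall>k<N. phi th k \<ge> 0) \<and> (\<Sum>k<N. phi th k) = 1) \<and>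
     (\<forall>th\<in>S. \<forall>i<n*(n+m). \<forall>j<n*(n+m).
        integrable (vdist n m p th) (\<lambda>v. v i * v j) \<and>
        (\<integral>v. v i * v j \<partial>vdist n m p th) = (\<Sum>k<N. phi th k * Ms k i j))"

text \<open>Exponential robust mean-square stability with rate beta
  (sqrt(E||x_t||^2) <= alpha ||x0|| beta^t, written in squared form with the
  nonnegative Lebesgue integral as expectation).\<close>
definition ms_stable_rate :: "nat \<Rightarrow> nat \<Rightarrow> rmat \<Rightarrow> ('p \<Rightarrow> rvec \<Rightarrow> real) \<Rightarrow> (nat \<Rightarrow> 'p) set
      \<Rightarrow> real \<Rightarrow> bool" where
  "ms_stable_rate n m K p Seqs \<beta> \<longleftrightarrow> 0 < \<beta> \<and> \<beta> < 1 \<and>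
     (\<exists>\<alpha>>0. \<forall>x0 th t. th \<in> Seqs \<longrightarrow>
        (\<integral>\<^sup>+ vs. ennreal ((enorm n (traj n m K x0 vs t))\<^sup>2)
            \<partial>(PiM {..<t} (\<lambda>s. vdist n m p (th s))))
        \<le> ennreal ((\<alpha> * enorm n x0 * \<beta> ^ t)\<^sup>2))"

text \<open>Blocks M_{i,j} (n x n) of M: rows n*i.., columns n*j.. (0-based).\<close>
definition Faa :: "nat \<Rightarrow> rmat \<Rightarrow> rmat" where
  "Faa n M = (\<lambda>a b. M (n * (b mod n) + a mod n) (n * (b div n) + a div n))"
definition Fab :: "nat \<Rightarrow> nat \<Rightarrow> rmat \<Rightarrow> rmat" where
  "Fab n m M = (\<lambda>a b. M (n * (n + b mod m) + a mod n) (n * (b div m) + a div n))"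
definition Fba :: "nat \<Rightarrow> rmat \<Rightarrow> rmat" where
  "Fba n M = (\<lambda>a b. M (n * (b mod n) + a mod n) (n * (n + b div n) + a div n))"
definition Fbb :: "nat \<Rightarrow> nat \<Rightarrow> rmat \<Rightarrow> rmat" where
  "Fbb n m M = (\<lambda>a b. M (n * (n + b mod m) + a mod n) (n * (n + b div m) + a div n))"

definition Fk :: "nat \<Rightarrow> nat \<Rightarrow> rmat \<Rightarrow> rmat \<Rightarrow> rmat" where
  "Fk n m M K = (\<lambda>a b. Faa n M a b
      - mmul (n * m) (Fab n m M) (kron m n idm K) a b
      - mmul (m * n) (Fba n M) (kron n n K idm) a b
      + mmul (m * m) (Fbb n m M) (kron m n K K) a b)"

definition Fth :: "nat \<Rightarrow> nat \<Rightarrow> nat \<Rightarrow> (nat \<Rightarrow> rmat) \<Rightarrow> rvec \<Rightarrow> rmat \<Rightarrow> rmat" where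
  "Fth n m N Ms th K = (\<lambda>a b. \<Sum>k<N. th k * Fk n m (Ms k) K a b)"

text \<open>vech: position of entry (r,c), c <= r, in vech of an n x n matrix.\<close>
definition vech_pos :: "nat \<Rightarrow> nat \<Rightarrow> nat \<Rightarrow> nat" where
  "vech_pos n r c = (\<Sum>k<c. n - k) + (r - c)"

definition ntil :: "nat \<Rightarrow> nat" where
  "ntil n = n * (n + 1) div 2"

text \<open>E_e (ntil x n^2): E_e vec(X) = vech(X).  D (n^2 x ntil): D vech(Y) = vec(Y).\<close>
definition Ee :: "nat \<Rightarrow> rmat" where
  "Ee n = (\<lambda>p q. if \<exists>r c. c \<le> r \<and> r < n \<and> p = vech_pos n r c \<and> q = r + n * c then 1 else 0)"

definition Dd :: "nat \<Rightarrow> rmat" where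
  "Dd n = (\<lambda>q p. if p = vech_pos n (max (q mod n) (q div n)) (min (q mod n) (q div n))
                 then 1 else 0)"

definition Cmap :: "nat \<Rightarrow> rmat \<Rightarrow> rmat" where
  "Cmap n Y = mmul (n * n) (mmul (n * n) (Ee n) Y) (Dd n)"

primrec xtraj :: "nat \<Rightarrow> nat \<Rightarrow> nat \<Rightarrow> (nat \<Rightarrow> rmat) \<Rightarrow> rmat \<Rightarrow> rvec \<Rightarrow> (nat \<Rightarrow> rvec) \<Rightarrow> nat \<Rightarrow> rvec" where
  "xtraj n m N Ms K x0 ths 0 = x0"
| "xtraj n m N Ms K x0 ths (Suc t) = mvmul (ntil n) (Cmap n (Fth n m N Ms (ths t) K)) (xtraj n m N Ms K x0 ths t)"

definition exp_stable_rate :: "nat \<Rightarrow> nat \<Rightarrow> nat \<Rightarrow> (nat \<Rightarrow> rmat) \<Rightarrow> rmat \<Rightarrow> (nat \<Rightarrow> rvec) set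
      \<Rightarrow> real \<Rightarrow> bool" where
  "exp_stable_rate n m N Ms K Seqs \<beta> \<longleftrightarrow> 0 < \<beta> \<and> \<beta> < 1 \<and>
     (\<exists>\<alpha>>0. \<forall>x0 ths t. ths \<in> Seqs \<longrightarrow>
        enorm (ntil n) (xtraj n m N Ms K x0 ths t) \<le> \<alpha> * enorm (ntil n) x0 * \<beta> ^ t)"

end

theory Submission
  imports Defs
begin

(*
  The second-moment matrix Z_t = E[x_t x_t^T] of the closed loop evolves linearly,
  Z_(t+1) = E[(A - B K) Z_t (A - B K)^T], and by the SMP property the coefficients of this map
  are exactly the entries of F(phi(theta_t), K). Hence vech Z_t is the state of the expanded system
  started at vech Z_0, for every symmetric Z_0. Moreover E |x_t|^2 = tr Z_t, and for moment
  matrices tr Z, the entrywise l1 norm of Z and |vech Z| agree up to factors depending only on n.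
  A bound alpha^2 beta^(2t) |x_0|^2 on tr Z_t for the rank-one initial values Z_0 = x_0 x_0^T
  therefore bounds the expanded system for all symmetric initial values, since these are linear
  combinations of the rank-one matrices (e_i + e_j)(e_i + e_j)^T and (e_i - e_j)(e_i - e_j)^T;
  conversely a bound on the expanded system bounds tr Z_t.
*)

section \<open>Half-vectorisation\<close>

lemma add_mult_less_mult: "r < n \<Longrightarrow> c < k \<Longrightarrow> r + n * c < n * (k::nat)"
proof -
  assume "r < n" "c < k"
  then have "r + n * c < n * Suc c" by simp
  also have "\<dots> \<le> n * k" using \<open>c < k\<close> by (intro mult_le_mono2) simp
  finally show ?thesis .
qed

lemma sum_lessThan_mult: "(\<Sum>l<q * (p::nat). f l) = (\<Sum>j<p. \<Sum>i<q. f (i + q * j))"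
proof (induction p)
  case 0 then show ?case by simp
next
  case (Suc p)
  have "(\<Sum>l<q * Suc p. f l) = (\<Sum>l\<in>{0..<q * p}. f l) + (\<Sum>l\<in>{q * p..<q * p + q}. f l)"
    by (subst sum.atLeastLessThan_concat) (auto simp: lessThan_atLeast0 algebra_simps)
  also have "(\<Sum>l\<in>{q * p..<q * p + q}. f l) = (\<Sum>i<q. f (i + q * p))"
    using sum.shift_bounds_nat_ivl[of f 0 "q * p" q] by (simp add: lessThan_atLeast0 add.commute)
  finally show ?case using Suc by (simp add: lessThan_atLeast0[symmetric])
qed

lemma sum_if_eq_mult: "finite A \<Longrightarrow> v \<in> A \<Longrightarrow> (\<Sum>l\<in>A. (if l = v then 1 else 0) * (g l :: real)) = g v"
  by (subst sum.cong[OF refl, of _ _ "\<lambda>l. if l = v then g l else 0"]) (auto simp: sum.delta)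

definition lower_tri :: "nat \<Rightarrow> (nat \<times> nat) set" where
  "lower_tri n = {(r, c). c \<le> r \<and> r < n}"

lemma card_lower_tri: "card (lower_tri n) = (\<Sum>c<n. n - c)"
proof -
  have "lower_tri n = (\<lambda>(c, r). (r, c)) ` (SIGMA c:{..<n}. {c..<n})"
    by (auto simp: lower_tri_def image_iff)
  then have "card (lower_tri n) = card (SIGMA c:{..<n}. {c..<n})"
    by (simp add: card_image inj_on_def)
  then show ?thesis by simp
qed

lemma sum_lessThan_diff_eq_ntil: "(\<Sum>k<n. n - k) = ntil n"
proof -
  have "(\<Sum>k<n. n - k) = (\<Sum>k<n. Suc k)"
    by (rule sum.reindex_bij_witness[where i="\<lambda>k. n - Suc k" and j="\<lambda>k. n - Suc k"]) auto
  also have "\<dots> = (\<Sum>k\<le>n. k)"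
    by (induction n) auto
  also have "\<dots> = n * Suc n div 2"
    using gauss_sum_nat[of n] by (simp add: atMost_atLeast0)
  finally show ?thesis by (simp add: ntil_def)
qed

lemma vech_pos_less_col_start: "c \<le> r \<Longrightarrow> r < n \<Longrightarrow> vech_pos n r c < (\<Sum>k<Suc c. n - k)"
  by (simp add: vech_pos_def)

lemma vech_pos_lt_ntil: "c \<le> r \<Longrightarrow> r < n \<Longrightarrow> vech_pos n r c < ntil n"
proof -
  assume "c \<le> r" "r < n"
  then have "vech_pos n r c < (\<Sum>k<Suc c. n - k)" by (rule vech_pos_less_col_start)
  also have "\<dots> \<le> (\<Sum>k<n. n - k)" using \<open>c \<le> r\<close> \<open>r < n\<close> by (intro sum_mono2) auto
  finally show ?thesis by (simp add: sum_lessThan_diff_eq_ntil)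
qed

lemma vech_pos_less_vech_pos:
  assumes "c \<le> r" "r < n" "c < c'"
  shows "vech_pos n r c < vech_pos n r' c'"
proof -
  have "vech_pos n r c < (\<Sum>k<Suc c. n - k)" using assms by (intro vech_pos_less_col_start)
  also have "\<dots> \<le> (\<Sum>k<c'. n - k)" using assms by (intro sum_mono2) auto
  also have "\<dots> \<le> vech_pos n r' c'" by (simp add: vech_pos_def)
  finally show ?thesis .
qed

lemma vech_pos_inj:
  assumes "c \<le> r" "r < n" "c' \<le> r'" "r' < n" "vech_pos n r c = vech_pos n r' c'"
  shows "r = r' \<and> c = c'"
proof -
  have "c = c'"
    using vech_pos_less_vech_pos[of c r n c' r'] vech_pos_less_vech_pos[of c' r' n c r] assms
    by (cases c c' rule: linorder_cases) auto
  then show ?thesis using assms by (auto simp: vech_pos_def)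
qed

lemma bij_betw_vech_pos: "bij_betw (\<lambda>(r, c). vech_pos n r c) (lower_tri n) {..<ntil n}"
proof -
  have inj: "inj_on (\<lambda>(r, c). vech_pos n r c) (lower_tri n)"
    by (auto simp: inj_on_def lower_tri_def dest: vech_pos_inj)
  have "(\<lambda>(r, c). vech_pos n r c) ` lower_tri n = {..<ntil n}"
  proof (rule card_subset_eq)
    show "(\<lambda>(r, c). vech_pos n r c) ` lower_tri n \<subseteq> {..<ntil n}"
      by (auto simp: lower_tri_def vech_pos_lt_ntil)
    show "card ((\<lambda>(r, c). vech_pos n r c) ` lower_tri n) = card {..<ntil n}"
      using inj by (simp add: card_image card_lower_tri sum_lessThan_diff_eq_ntil)
  qed simp
  with inj show ?thesis by (simp add: bij_betw_def)
qed

lemma Ee_vech_pos: "c \<le> r \<Longrightarrow> r < n \<Longrightarrow> Ee n (vech_pos n r c) q = (if q = r + n * c then 1 else 0)"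
  unfolding Ee_def using vech_pos_inj[of c r n] by auto

lemma sum_Ee_vech_pos:
  assumes "c \<le> r" "r < n"
  shows "(\<Sum>q<n * n. Ee n (vech_pos n r c) q * w q) = w (r + n * c)"
proof -
  have "r + n * c < n * n" using assms by (intro add_mult_less_mult) auto
  with assms show ?thesis by (simp add: Ee_vech_pos sum_if_eq_mult)
qed

lemma sum_Dd:
  assumes "0 < n" "b < n * n"
  shows "(\<Sum>l<ntil n. Dd n b l * x l) = x (vech_pos n (max (b mod n) (b div n)) (min (b mod n) (b div n)))"
proof -
  have "b div n < n" "b mod n < n" using assms by (simp_all add: less_mult_imp_div_less)
  then have "vech_pos n (max (b mod n) (b div n)) (min (b mod n) (b div n)) < ntil n"
    by (intro vech_pos_lt_ntil) auto
  then show ?thesis unfolding Dd_def by (simp add: sum_if_eq_mult)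
qed

lemma mvmul_Cmap: "mvmul (ntil n) (Cmap n F) x p =
   (\<Sum>q<n * n. Ee n p q * (\<Sum>j<n * n. F q j * (\<Sum>l<ntil n. Dd n j l * x l)))"
proof -
  have "mvmul (ntil n) (Cmap n F) x p
      = (\<Sum>l<ntil n. \<Sum>j<n * n. \<Sum>q<n * n. Ee n p q * F q j * Dd n j l * x l)"
    by (simp add: mvmul_def Cmap_def mmul_def sum_distrib_right)
  also have "\<dots> = (\<Sum>q<n * n. \<Sum>j<n * n. \<Sum>l<ntil n. Ee n p q * F q j * Dd n j l * x l)"
    by (subst sum.swap) (subst (2) sum.swap, subst sum.swap, rule refl)
  also have "\<dots> = (\<Sum>q<n * n. Ee n p q * (\<Sum>j<n * n. F q j * (\<Sum>l<ntil n. Dd n j l * x l)))"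
    by (simp add: sum_distrib_left mult.assoc)
  finally show ?thesis .
qed

definition is_vech :: "nat \<Rightarrow> rvec \<Rightarrow> rmat \<Rightarrow> bool" where
  "is_vech n x Z \<longleftrightarrow> (\<forall>r c. c \<le> r \<longrightarrow> r < n \<longrightarrow> x (vech_pos n r c) = Z r c)"

definition sym_mat :: "nat \<Rightarrow> rmat \<Rightarrow> bool" where
  "sym_mat n Z \<longleftrightarrow> (\<forall>r c. r < n \<longrightarrow> c < n \<longrightarrow> Z r c = Z c r)"

definition vech :: "nat \<Rightarrow> rmat \<Rightarrow> rvec" where
  "vech n Z = mvmul (n * n) (Ee n) (\<lambda>q. Z (q mod n) (q div n))"

lemma is_vech_vech: "is_vech n (vech n Z) Z"
  by (auto simp: is_vech_def vech_def mvmul_def sum_Ee_vech_pos)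

definition unvech :: "nat \<Rightarrow> rvec \<Rightarrow> rmat" where
  "unvech n x = (\<lambda>r c. x (vech_pos n (max r c) (min r c)))"

lemma sym_mat_unvech: "sym_mat n (unvech n x)"
  by (simp add: sym_mat_def unvech_def max.commute min.commute)

lemma is_vech_unvech: "is_vech n x (unvech n x)"
  by (simp add: is_vech_def unvech_def max_def min_def)

lemma is_vech_imp_eq_unvech: "is_vech n x Z \<Longrightarrow> sym_mat n Z \<Longrightarrow> r < n \<Longrightarrow> c < n \<Longrightarrow> Z r c = unvech n x r c"
  by (auto simp: is_vech_def sym_mat_def unvech_def max_def min_def)

text \<open>\<open>Dd n\<close> rebuilds \<open>vec Z\<close> from \<open>vech Z\<close> because \<open>Z\<close> is symmetric, \<open>F\<close> acts on \<open>vec Z\<close>, and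
  \<open>Ee n\<close> reads off the lower triangle of the result.\<close>

lemma is_vech_mvmul_Cmap:
  assumes n: "0 < n" and sym: "sym_mat n Z" and vech: "is_vech n x Z"
    and FH: "\<And>r r' c c'. r < n \<Longrightarrow> r' < n \<Longrightarrow> c < n \<Longrightarrow> c' < n \<Longrightarrow> F (r + n * r') (c + n * c') = H r c r' c'"
  shows "is_vech n (mvmul (ntil n) (Cmap n F) x) (\<lambda>r r'. \<Sum>c<n. \<Sum>c'<n. H r c r' c' * Z c c')"
  unfolding is_vech_def
proof (intro allI impI)
  fix r r' assume rr': "r' \<le> r" "r < n"
  have vec: "(\<Sum>l<ntil n. Dd n j l * x l) = Z (j mod n) (j div n)" if j: "j < n * n" for j
  proof -
    have "j div n < n" "j mod n < n" using j n by (simp_all add: less_mult_imp_div_less)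
    then show ?thesis
      using sum_Dd[OF n j, of x] vech sym unfolding is_vech_def sym_mat_def
      by (cases "j div n \<le> j mod n") auto
  qed
  have "mvmul (ntil n) (Cmap n F) x (vech_pos n r r') =
      (\<Sum>q<n * n. Ee n (vech_pos n r r') q * (\<Sum>j<n * n. F q j * Z (j mod n) (j div n)))"
    unfolding mvmul_Cmap using vec by (intro sum.cong refl arg_cong2[where f="(*)"]) auto
  also have "\<dots> = (\<Sum>j<n * n. F (r + n * r') j * Z (j mod n) (j div n))"
    by (rule sum_Ee_vech_pos[OF rr'])
  also have "\<dots> = (\<Sum>c'<n. \<Sum>c<n. H r c r' c' * Z c c')"
    using n rr' by (simp add: sum_lessThan_mult FH)
  also have "\<dots> = (\<Sum>c<n. \<Sum>c'<n. H r c r' c' * Z c c')"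
    by (rule sum.swap)
  finally show "mvmul (ntil n) (Cmap n F) x (vech_pos n r r') = (\<Sum>c<n. \<Sum>c'<n. H r c r' c' * Z c c')" .
qed

definition cl_mat :: "nat \<Rightarrow> nat \<Rightarrow> rmat \<Rightarrow> rvec \<Rightarrow> rmat" where
  "cl_mat n m K v = (\<lambda>r c. Amat n v r c - (\<Sum>j<m. Bmat n v r j * K j c))"

lemma cl_step_eq: "cl_step n m K v x r = (\<Sum>c<n. cl_mat n m K v r c * x c)"
  by (simp add: cl_step_def cl_mat_def)

text \<open>The entry \<open>(r, c)\<close> of \<open>A - B K\<close> is the linear form with coefficient vector
  \<open>cl_coef n m K r c\<close> in \<open>v = vec [A, B]\<close>.\<close>

definition cl_coef :: "nat \<Rightarrow> nat \<Rightarrow> rmat \<Rightarrow> nat \<Rightarrow> nat \<Rightarrow> rvec" where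
  "cl_coef n m K r c =
     (\<lambda>k. (if k = r + n * c then 1 else 0) - (\<Sum>j<m. K j c * (if k = r + n * (n + j) then 1 else 0)))"

lemma sum_cl_coef:
  assumes "r < n" "c < n"
  shows "(\<Sum>k<n * (n + m). cl_coef n m K r c k * f k) = f (r + n * c) - (\<Sum>j<m. K j c * f (r + n * (n + j)))"
proof -
  let ?d = "n * (n + m)"
  have "(\<Sum>k<?d. cl_coef n m K r c k * f k) = (\<Sum>k<?d. (if k = r + n * c then 1 else 0) * f k)
      - (\<Sum>j<m. K j c * (\<Sum>k<?d. (if k = r + n * (n + j) then 1 else 0) * f k))"
    unfolding cl_coef_def left_diff_distrib sum_subtractf sum_distrib_right sum_distrib_left
    by (subst sum.swap) (simp add: mult.assoc)
  also have "\<dots> = f (r + n * c) - (\<Sum>j<m. K j c * f (r + n * (n + j)))"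
    using assms by (simp add: sum_if_eq_mult add_mult_less_mult)
  finally show ?thesis .
qed

lemma cl_mat_eq_sum_cl_coef:
  "r < n \<Longrightarrow> c < n \<Longrightarrow> cl_mat n m K v r c = (\<Sum>k<n * (n + m). cl_coef n m K r c k * v k)"
  by (simp add: sum_cl_coef cl_mat_def Amat_def Bmat_def mult.commute[of "v _"])

lemma mmul_Fab_kron:
  assumes "0 < n" "0 < m" "r < n" "r' < n" "c < n" "c' < n"
  shows "mmul (n * m) (Fab n m M) (kron m n idm K) (r + n * r') (c + n * c')
    = (\<Sum>j<m. K j c * M (r + n * (n + j)) (r' + n * c'))"
proof -
  have "mmul (n * m) (Fab n m M) (kron m n idm K) (r + n * r') (c + n * c')
      = (\<Sum>j2<n. \<Sum>i<m. Fab n m M (r + n * r') (i + m * j2) * kron m n idm K (i + m * j2) (c + n * c'))"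
    unfolding mmul_def by (subst mult.commute) (rule sum_lessThan_mult)
  also have "\<dots> = (\<Sum>j2<n. (if j2 = c' then 1 else 0) * (\<Sum>i<m. K i c * M (r + n * (n + i)) (r' + n * j2)))"
    using assms by (intro sum.cong refl) (auto simp: Fab_def kron_def idm_def algebra_simps)
  also have "\<dots> = (\<Sum>i<m. K i c * M (r + n * (n + i)) (r' + n * c'))"
    using assms by (simp add: sum_if_eq_mult)
  finally show ?thesis .
qed

lemma mmul_Fba_kron:
  assumes "0 < n" "r < n" "r' < n" "c < n" "c' < n"
  shows "mmul (m * n) (Fba n M) (kron n n K idm) (r + n * r') (c + n * c')
    = (\<Sum>j<m. K j c' * M (r + n * c) (r' + n * (n + j)))"
proof -
  have "mmul (m * n) (Fba n M) (kron n n K idm) (r + n * r') (c + n * c')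
      = (\<Sum>j<m. \<Sum>i<n. Fba n M (r + n * r') (i + n * j) * kron n n K idm (i + n * j) (c + n * c'))"
    unfolding mmul_def by (subst mult.commute) (rule sum_lessThan_mult)
  also have "\<dots> = (\<Sum>j<m. \<Sum>i<n. (if i = c then 1 else 0) * (K j c' * M (r + n * i) (r' + n * (n + j))))"
    using assms by (intro sum.cong refl) (auto simp: Fba_def kron_def idm_def algebra_simps)
  also have "\<dots> = (\<Sum>j<m. K j c' * M (r + n * c) (r' + n * (n + j)))"
    using assms by (simp add: sum_if_eq_mult)
  finally show ?thesis .
qed

lemma mmul_Fbb_kron:
  assumes "0 < n" "0 < m" "r < n" "r' < n" "c < n" "c' < n"
  shows "mmul (m * m) (Fbb n m M) (kron m n K K) (r + n * r') (c + n * c')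
    = (\<Sum>j<m. \<Sum>j'<m. K j c * K j' c' * M (r + n * (n + j)) (r' + n * (n + j')))"
proof -
  have "mmul (m * m) (Fbb n m M) (kron m n K K) (r + n * r') (c + n * c')
      = (\<Sum>j'<m. \<Sum>j<m. Fbb n m M (r + n * r') (j + m * j') * kron m n K K (j + m * j') (c + n * c'))"
    unfolding mmul_def by (rule sum_lessThan_mult)
  also have "\<dots> = (\<Sum>j'<m. \<Sum>j<m. K j c * K j' c' * M (r + n * (n + j)) (r' + n * (n + j')))"
    using assms by (intro sum.cong refl) (auto simp: Fbb_def kron_def algebra_simps)
  also have "\<dots> = (\<Sum>j<m. \<Sum>j'<m. K j c * K j' c' * M (r + n * (n + j)) (r' + n * (n + j')))"
    by (rule sum.swap)
  finally show ?thesis .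
qed

lemma Fk_eq_sum_cl_coef:
  assumes "0 < n" "0 < m" "r < n" "r' < n" "c < n" "c' < n"
  shows "Fk n m M K (r + n * r') (c + n * c') =
    (\<Sum>k<n * (n + m). \<Sum>k'<n * (n + m). cl_coef n m K r c k * cl_coef n m K r' c' k' * M k k')"
    (is "_ = (\<Sum>k<?d. \<Sum>k'<?d. ?a k * ?b k' * M k k')")
proof -
  have "(\<Sum>k<?d. \<Sum>k'<?d. ?a k * ?b k' * M k k') = (\<Sum>k<?d. ?a k * (\<Sum>k'<?d. ?b k' * M k k'))"
    by (simp add: sum_distrib_left mult.assoc)
  also have "\<dots> = (\<Sum>k<?d. ?a k * (M k (r' + n * c') - (\<Sum>j<m. K j c' * M k (r' + n * (n + j)))))"
    using assms by (simp add: sum_cl_coef)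
  also have "\<dots> = (M (r + n * c) (r' + n * c') - (\<Sum>j<m. K j c' * M (r + n * c) (r' + n * (n + j))))
      - (\<Sum>j<m. K j c * (M (r + n * (n + j)) (r' + n * c')
          - (\<Sum>j'<m. K j' c' * M (r + n * (n + j)) (r' + n * (n + j')))))"
    using assms by (simp add: sum_cl_coef)
  also have "\<dots> = Fk n m M K (r + n * r') (c + n * c')"
    using assms
    by (simp add: Fk_def mmul_Fab_kron mmul_Fba_kron mmul_Fbb_kron Faa_def
        right_diff_distrib sum_subtractf sum_distrib_left mult.assoc add.commute)
  finally show ?thesis ..
qed

lemma
  fixes f :: "'i \<Rightarrow> 'j \<Rightarrow> 'a \<Rightarrow> real"
  assumes "\<And>i j. i \<in> A \<Longrightarrow> j \<in> B \<Longrightarrow> integrable M (f i j)"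
  shows integrable_double_sum: "integrable M (\<lambda>x. \<Sum>i\<in>A. \<Sum>j\<in>B. f i j x)"
    and integral_double_sum: "(\<integral>x. (\<Sum>i\<in>A. \<Sum>j\<in>B. f i j x) \<partial>M) = (\<Sum>i\<in>A. \<Sum>j\<in>B. integral\<^sup>L M (f i j))"
  using assms by (auto intro!: sum.cong Bochner_Integration.integrable_sum
      simp: Bochner_Integration.integral_sum)

lemma
  fixes X :: "'a \<Rightarrow> nat \<Rightarrow> real"
  assumes "\<And>k k'. k < d \<Longrightarrow> k' < d \<Longrightarrow> integrable M (\<lambda>\<omega>. X \<omega> k * X \<omega> k')"
  shows integrable_sum_mult_sum: "integrable M (\<lambda>\<omega>. (\<Sum>k<d. a k * X \<omega> k) * (\<Sum>k<d. b k * X \<omega> k))"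
    and integral_sum_mult_sum: "(\<integral>\<omega>. (\<Sum>k<d. a k * X \<omega> k) * (\<Sum>k<d. b k * X \<omega> k) \<partial>M)
      = (\<Sum>k<d. \<Sum>k'<d. a k * b k' * (\<integral>\<omega>. X \<omega> k * X \<omega> k' \<partial>M))"
proof -
  have expand: "(\<Sum>k<d. a k * X \<omega> k) * (\<Sum>k<d. b k * X \<omega> k) = (\<Sum>k<d. \<Sum>k'<d. a k * b k' * (X \<omega> k * X \<omega> k'))" for \<omega>
    by (simp add: sum_product mult_ac)
  have int: "integrable M (\<lambda>\<omega>. a k * b k' * (X \<omega> k * X \<omega> k'))" if "k \<in> {..<d}" "k' \<in> {..<d}" for k k'
    using assms that by simp
  show "integrable M (\<lambda>\<omega>. (\<Sum>k<d. a k * X \<omega> k) * (\<Sum>k<d. b k * X \<omega> k))"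
    unfolding expand by (rule integrable_double_sum[OF int])
  show "(\<integral>\<omega>. (\<Sum>k<d. a k * X \<omega> k) * (\<Sum>k<d. b k * X \<omega> k) \<partial>M)
      = (\<Sum>k<d. \<Sum>k'<d. a k * b k' * (\<integral>\<omega>. X \<omega> k * X \<omega> k' \<partial>M))"
    unfolding expand by (subst integral_double_sum[OF int]) simp_all
qed

section \<open>Second-moment dynamics of the closed loop\<close>

lemma
  fixes Mf :: "nat \<Rightarrow> 'a measure" and F g :: "_ \<Rightarrow> real"
  assumes prob: "\<And>s. prob_space (Mf s)" and I: "finite I" "t \<notin> I"
    and F: "integrable (Mf t) F" and g: "integrable (PiM I Mf) g"
    and g_meas: "g \<in> borel_measurable (PiM (insert t I) Mf)"
    and g_indep: "\<And>x y. g (x(t := y)) = g x"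
  shows integrable_PiM_insert_mult: "integrable (PiM (insert t I) Mf) (\<lambda>x. F (x t) * g x)"
    and integral_PiM_insert_mult:
      "(\<integral>x. F (x t) * g x \<partial>PiM (insert t I) Mf) = integral\<^sup>L (Mf t) F * integral\<^sup>L (PiM I Mf) g"
proof -
  interpret product_sigma_finite Mf
    unfolding product_sigma_finite_def using prob_space_imp_sigma_finite[OF prob] by blast
  have F_meas: "F \<in> borel_measurable (Mf t)" and g_borel: "g \<in> borel_measurable (PiM I Mf)"
    using F g by simp_all
  have Ft_meas: "(\<lambda>x. F (x t)) \<in> borel_measurable (PiM (insert t I) Mf)"
    by (rule measurable_compose[OF measurable_component_singleton[of t "insert t I" Mf] F_meas]) simp
  have "(\<integral>\<^sup>+x. ennreal (norm (F (x t) * g x)) \<partial>PiM (insert t I) Mf)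
      = (\<integral>\<^sup>+x. (\<integral>\<^sup>+y. ennreal (norm (F ((x(t:=y)) t) * g (x(t:=y)))) \<partial>Mf t) \<partial>PiM I Mf)"
    using Ft_meas g_meas by (intro product_nn_integral_insert I) measurable
  also have "\<dots> = (\<integral>\<^sup>+x. (\<integral>\<^sup>+y. ennreal (norm (F y)) \<partial>Mf t) * ennreal (norm (g x)) \<partial>PiM I Mf)"
    using F_meas by (simp add: g_indep abs_mult ennreal_mult nn_integral_multc)
  also have "\<dots> = (\<integral>\<^sup>+y. ennreal (norm (F y)) \<partial>Mf t) * (\<integral>\<^sup>+x. ennreal (norm (g x)) \<partial>PiM I Mf)"
    using g_borel by (intro nn_integral_cmult) measurable
  also have "\<dots> < \<infinity>"
    using F g by (simp add: integrable_iff_bounded ennreal_mult_less_top)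
  finally show int: "integrable (PiM (insert t I) Mf) (\<lambda>x. F (x t) * g x)"
    using Ft_meas g_meas by (simp add: integrable_iff_bounded)
  have "(\<integral>x. F (x t) * g x \<partial>PiM (insert t I) Mf)
      = (\<integral>x. (\<integral>y. F ((x(t:=y)) t) * g (x(t:=y)) \<partial>Mf t) \<partial>PiM I Mf)"
    by (rule product_integral_insert[OF I int])
  then show "(\<integral>x. F (x t) * g x \<partial>PiM (insert t I) Mf) = integral\<^sup>L (Mf t) F * integral\<^sup>L (PiM I Mf) g"
    by (simp add: g_indep)
qed

lemma traj_cong: "(\<And>s. s < t \<Longrightarrow> vs s = vs' s) \<Longrightarrow> traj n m K u vs t = traj n m K u vs' t"
  by (induction t) auto

lemma traj_Suc_mult:
  "traj n m K u vs (Suc t) i * traj n m K u vs (Suc t) j =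
    (\<Sum>c<n. \<Sum>c'<n. (cl_mat n m K (vs t) i c * cl_mat n m K (vs t) j c')
      * (traj n m K u vs t c * traj n m K u vs t c'))"
  by (simp add: cl_step_eq sum_product mult_ac)

definition outer :: "rvec \<Rightarrow> rmat" where
  "outer u = (\<lambda>r c. u r * u c)"

lemma sym_mat_outer: "sym_mat n (outer u)"
  by (simp add: sym_mat_def outer_def mult.commute)

locale smp_closed_loop =
  fixes n m N :: nat and S :: "'p set" and p :: "'p \<Rightarrow> rvec \<Rightarrow> real"
    and phi :: "'p \<Rightarrow> nat \<Rightarrow> real" and Ms :: "nat \<Rightarrow> rmat" and K :: rmat
  assumes n_pos: "0 < n" and m_pos: "0 < m"
    and prob_space_vdist: "\<And>th. th \<in> S \<Longrightarrow> prob_space (vdist n m p th)"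
    and smp: "is_SMP n m S p N Ms phi"
begin

lemma integrable_vdist_mult:
  "th \<in> S \<Longrightarrow> k < n * (n + m) \<Longrightarrow> k' < n * (n + m) \<Longrightarrow> integrable (vdist n m p th) (\<lambda>v. v k * v k')"
  using smp unfolding is_SMP_def by blast

lemma integral_vdist_mult:
  "th \<in> S \<Longrightarrow> k < n * (n + m) \<Longrightarrow> k' < n * (n + m) \<Longrightarrow>
    (\<integral>v. v k * v k' \<partial>vdist n m p th) = (\<Sum>i<N. phi th i * Ms i k k')"
  using smp unfolding is_SMP_def by blast

definition cl_moment :: "'p \<Rightarrow> nat \<Rightarrow> nat \<Rightarrow> nat \<Rightarrow> nat \<Rightarrow> real" where
  "cl_moment th r c r' c' = (\<integral>v. cl_mat n m K v r c * cl_mat n m K v r' c' \<partial>vdist n m p th)"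

lemma integrable_cl_mat_mult:
  assumes "th \<in> S" "r < n" "c < n" "r' < n" "c' < n"
  shows "integrable (vdist n m p th) (\<lambda>v. cl_mat n m K v r c * cl_mat n m K v r' c')"
  using assms by (simp add: cl_mat_eq_sum_cl_coef integrable_sum_mult_sum integrable_vdist_mult)

lemma cl_moment_eq_Fth:
  assumes "th \<in> S" "r < n" "r' < n" "c < n" "c' < n"
  shows "cl_moment th r c r' c' = Fth n m N Ms (phi th) K (r + n * r') (c + n * c')"
proof -
  let ?d = "n * (n + m)" and ?a = "cl_coef n m K r c" and ?b = "cl_coef n m K r' c'"
  have "cl_moment th r c r' c' = (\<Sum>k<?d. \<Sum>k'<?d. ?a k * ?b k' * (\<Sum>i<N. phi th i * Ms i k k'))"
    using assms
    by (simp add: cl_moment_def cl_mat_eq_sum_cl_coef integral_sum_mult_sum integrable_vdist_mult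
        integral_vdist_mult)
  also have "\<dots> = (\<Sum>i<N. phi th i * (\<Sum>k<?d. \<Sum>k'<?d. ?a k * ?b k' * Ms i k k'))"
    by (simp add: sum_distrib_left sum.swap[where B="{..<N}"] mult_ac)
  also have "\<dots> = Fth n m N Ms (phi th) K (r + n * r') (c + n * c')"
    using assms n_pos m_pos by (simp add: Fth_def Fk_eq_sum_cl_coef)
  finally show ?thesis .
qed

text \<open>\<open>moment_map th Z = E[(A - B K) Z (A - B K)\<^sup>T]\<close> under the parameter \<open>th\<close>; it propagates the
  second-moment matrix \<open>E[x\<^sub>t x\<^sub>t\<^sup>T]\<close> of the closed loop.\<close>

definition moment_map :: "'p \<Rightarrow> rmat \<Rightarrow> rmat" where
  "moment_map th Z = (\<lambda>r r'. \<Sum>c<n. \<Sum>c'<n. cl_moment th r c r' c' * Z c c')"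

primrec moment_traj :: "(nat \<Rightarrow> 'p) \<Rightarrow> rmat \<Rightarrow> nat \<Rightarrow> rmat" where
  "moment_traj th Z 0 = Z"
| "moment_traj th Z (Suc t) = moment_map (th t) (moment_traj th Z t)"

lemma sym_mat_moment_map:
  assumes "sym_mat n Z"
  shows "sym_mat n (moment_map th Z)"
  unfolding sym_mat_def
proof (intro allI impI)
  fix r r' assume "r < n" "r' < n"
  have "moment_map th Z r' r = (\<Sum>c<n. \<Sum>c'<n. cl_moment th r c' r' c * Z c c')"
    unfolding moment_map_def cl_moment_def by (simp add: mult.commute)
  also have "\<dots> = (\<Sum>c'<n. \<Sum>c<n. cl_moment th r c' r' c * Z c' c)"
    using assms unfolding sym_mat_def by (subst sum.swap) (intro sum.cong refl; simp)
  finally show "moment_map th Z r r' = moment_map th Z r' r"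
    by (simp add: moment_map_def)
qed

lemma sym_mat_moment_traj: "sym_mat n Z \<Longrightarrow> sym_mat n (moment_traj th Z t)"
  by (induction t) (auto intro: sym_mat_moment_map)

lemma is_vech_xtraj:
  assumes th: "range th \<subseteq> S" and "sym_mat n Z" and "is_vech n x Z"
  shows "is_vech n (xtraj n m N Ms K x (\<lambda>s. phi (th s)) t) (moment_traj th Z t)"
proof (induction t)
  case 0 then show ?case using \<open>is_vech n x Z\<close> by simp
next
  case (Suc t)
  show ?case
    unfolding xtraj.simps moment_traj.simps moment_map_def
    using n_pos sym_mat_moment_traj[OF \<open>sym_mat n Z\<close>] Suc
    by (rule is_vech_mvmul_Cmap) (use th in \<open>simp add: cl_moment_eq_Fth subsetD\<close>)
qed

lemma moment_traj_lincomb: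
  assumes "finite A" and Z: "\<And>r c. r < n \<Longrightarrow> c < n \<Longrightarrow> Z r c = (\<Sum>k\<in>A. a k * Y k r c)"
  shows "r < n \<Longrightarrow> c < n \<Longrightarrow> moment_traj th Z t r c = (\<Sum>k\<in>A. a k * moment_traj th (Y k) t r c)"
proof (induction t arbitrary: r c)
  case 0 then show ?case using Z by simp
next
  case (Suc t)
  have "moment_traj th Z (Suc t) r c
      = (\<Sum>c1<n. \<Sum>c2<n. \<Sum>k\<in>A. a k * (cl_moment (th t) r c1 c c2 * moment_traj th (Y k) t c1 c2))"
    using Suc.IH by (simp add: moment_map_def sum_distrib_left mult_ac)
  also have "\<dots> = (\<Sum>k\<in>A. a k * moment_traj th (Y k) (Suc t) r c)"
    by (simp add: moment_map_def sum_distrib_left sum.swap[where B=A])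
  finally show ?case .
qed

abbreviation param_meas :: "(nat \<Rightarrow> 'p) \<Rightarrow> nat set \<Rightarrow> (nat \<Rightarrow> rvec) measure" where
  "param_meas th I \<equiv> PiM I (\<lambda>s. vdist n m p (th s))"

lemma measurable_vdist_component:
  "k < n * (n + m) \<Longrightarrow> (\<lambda>v. v k) \<in> borel_measurable (vdist n m p th)"
  unfolding vdist_def LebR_def
  by (auto intro: measurable_completion measurable_component_singleton)

lemma traj_measurable:
  "{..<t} \<subseteq> I \<Longrightarrow> i < n \<Longrightarrow> (\<lambda>vs. traj n m K u vs t i) \<in> borel_measurable (param_meas th I)"
proof (induction t arbitrary: i)
  case 0 then show ?case by simp
next
  case (Suc t)
  then have "t \<in> I" "{..<t} \<subseteq> I" by (auto simp: lessThan_Suc)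
  have *: "(\<lambda>vs. vs t k) \<in> borel_measurable (param_meas th I)" if "k < n * (n + m)" for k
    by (rule measurable_compose[OF measurable_component_singleton[OF \<open>t \<in> I\<close>]
          measurable_vdist_component[OF that]])
  note IH = Suc.IH[OF \<open>{..<t} \<subseteq> I\<close>]
  show ?case
    unfolding traj.simps cl_step_def Amat_def Bmat_def using \<open>i < n\<close>
    by (intro borel_measurable_sum borel_measurable_times borel_measurable_diff borel_measurable_const
        IH * add_mult_less_mult) auto
qed

lemma
  assumes th: "range th \<subseteq> S" and idx: "i < n" "j < n" "c < n" "c' < n"
    and int: "integrable (param_meas th {..<t}) (\<lambda>vs. traj n m K u vs t c * traj n m K u vs t c')"
  shows integrable_traj_moment_step: "integrable (param_meas th {..<Suc t})
      (\<lambda>vs. (cl_mat n m K (vs t) i c * cl_mat n m K (vs t) j c') * (traj n m K u vs t c * traj n m K u vs t c'))"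
    and integral_traj_moment_step: "(\<integral>vs. (cl_mat n m K (vs t) i c * cl_mat n m K (vs t) j c')
        * (traj n m K u vs t c * traj n m K u vs t c') \<partial>param_meas th {..<Suc t})
      = cl_moment (th t) i c j c' * (\<integral>vs. traj n m K u vs t c * traj n m K u vs t c' \<partial>param_meas th {..<t})"
proof -
  have prob: "prob_space (vdist n m p (th s))" for s
    using th by (intro prob_space_vdist) auto
  have insert_t: "{..<Suc t} = insert t {..<t}"
    by (simp add: lessThan_Suc)
  have meas: "(\<lambda>vs. traj n m K u vs t c * traj n m K u vs t c') \<in> borel_measurable (param_meas th (insert t {..<t}))"
    using idx by (intro borel_measurable_times traj_measurable) auto
  have indep: "traj n m K u (vs(t := y)) t = traj n m K u vs t" for vs y
    by (rule traj_cong) simp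
  have F: "integrable (vdist n m p (th t)) (\<lambda>v. cl_mat n m K v i c * cl_mat n m K v j c')"
    using th idx by (intro integrable_cl_mat_mult) auto
  show "integrable (param_meas th {..<Suc t})
      (\<lambda>vs. (cl_mat n m K (vs t) i c * cl_mat n m K (vs t) j c') * (traj n m K u vs t c * traj n m K u vs t c'))"
    unfolding insert_t using indep by (intro integrable_PiM_insert_mult[OF prob _ _ F int meas]) auto
  show "(\<integral>vs. (cl_mat n m K (vs t) i c * cl_mat n m K (vs t) j c')
        * (traj n m K u vs t c * traj n m K u vs t c') \<partial>param_meas th {..<Suc t})
      = cl_moment (th t) i c j c' * (\<integral>vs. traj n m K u vs t c * traj n m K u vs t c' \<partial>param_meas th {..<t})"
    unfolding insert_t cl_moment_def using indep by (intro integral_PiM_insert_mult[OF prob _ _ F int meas]) auto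
qed

lemma traj_second_moment:
  assumes th: "range th \<subseteq> S"
  shows "i < n \<Longrightarrow> j < n \<Longrightarrow>
    integrable (param_meas th {..<t}) (\<lambda>vs. traj n m K u vs t i * traj n m K u vs t j) \<and>
    (\<integral>vs. traj n m K u vs t i * traj n m K u vs t j \<partial>param_meas th {..<t}) = moment_traj th (outer u) t i j"
proof (induction t arbitrary: i j)
  case 0
  interpret prob_space "param_meas th {}"
    using th by (intro prob_space_PiM prob_space_vdist) auto
  show ?case by (simp add: outer_def prob_space)
next
  case (Suc t)
  have int: "integrable (param_meas th {..<Suc t}) (\<lambda>vs. (cl_mat n m K (vs t) i c * cl_mat n m K (vs t) j c')
      * (traj n m K u vs t c * traj n m K u vs t c'))" if "c < n" "c' < n" for c c'
    using Suc that by (intro integrable_traj_moment_step th) auto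
  have "(\<integral>vs. traj n m K u vs (Suc t) i * traj n m K u vs (Suc t) j \<partial>param_meas th {..<Suc t})
      = (\<Sum>c<n. \<Sum>c'<n. \<integral>vs. (cl_mat n m K (vs t) i c * cl_mat n m K (vs t) j c')
          * (traj n m K u vs t c * traj n m K u vs t c') \<partial>param_meas th {..<Suc t})"
    unfolding traj_Suc_mult using int by (intro integral_double_sum) auto
  also have "\<dots> = moment_traj th (outer u) (Suc t) i j"
    using Suc by (simp add: integral_traj_moment_step th moment_map_def)
  finally show ?case
    unfolding traj_Suc_mult using int by (auto intro: integrable_double_sum)
qed

lemma nn_integral_sq_enorm_traj:
  assumes th: "range th \<subseteq> S"
  shows "(\<integral>\<^sup>+vs. ennreal ((enorm n (traj n m K u vs t))\<^sup>2) \<partial>param_meas th {..<t})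
    = ennreal (\<Sum>i<n. moment_traj th (outer u) t i i)"
proof -
  have sq: "(enorm n x)\<^sup>2 = (\<Sum>i<n. x i * x i)" for x
    by (simp add: enorm_def sum_nonneg power2_eq_square[symmetric])
  note moment = traj_second_moment[OF th, where t=t and u=u]
  have "(\<integral>\<^sup>+vs. ennreal ((enorm n (traj n m K u vs t))\<^sup>2) \<partial>param_meas th {..<t})
      = ennreal (\<integral>vs. (\<Sum>i<n. traj n m K u vs t i * traj n m K u vs t i) \<partial>param_meas th {..<t})"
    unfolding sq using moment
    by (intro nn_integral_eq_integral Bochner_Integration.integrable_sum) (auto simp: sum_nonneg)
  also have "\<dots> = ennreal (\<Sum>i<n. moment_traj th (outer u) t i i)"
    using moment by (simp add: Bochner_Integration.integral_sum)
  finally show ?thesis .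
qed

lemma sq_enorm_traj_le_iff:
  assumes th: "range th \<subseteq> S"
  shows "(\<integral>\<^sup>+vs. ennreal ((enorm n (traj n m K u vs t))\<^sup>2) \<partial>param_meas th {..<t}) \<le> ennreal (a\<^sup>2)
    \<longleftrightarrow> (\<Sum>i<n. moment_traj th (outer u) t i i) \<le> a\<^sup>2"
  by (simp add: nn_integral_sq_enorm_traj[OF th])

end

section \<open>Norm comparisons\<close>

definition l1_mat :: "nat \<Rightarrow> rmat \<Rightarrow> real" where
  "l1_mat n Z = (\<Sum>r<n. \<Sum>c<n. \<bar>Z r c\<bar>)"

lemma abs_le_enorm: "i < k \<Longrightarrow> \<bar>x i\<bar> \<le> enorm k x"
  unfolding enorm_def by (rule real_le_rsqrt) (auto intro: member_le_sum)

lemma enorm_le_sum_abs: "enorm k x \<le> (\<Sum>i<k. \<bar>x i\<bar>)"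
  using L2_set_le_sum_abs[of x "{..<k}"] by (simp add: enorm_def L2_set_def)

lemma enorm_le_l1_mat:
  assumes "is_vech n x Z"
  shows "enorm (ntil n) x \<le> l1_mat n Z"
proof -
  have "enorm (ntil n) x \<le> (\<Sum>q<ntil n. \<bar>x q\<bar>)"
    by (rule enorm_le_sum_abs)
  also have "\<dots> = (\<Sum>(r, c)\<in>lower_tri n. \<bar>x (vech_pos n r c)\<bar>)"
    using sum.reindex_bij_betw[OF bij_betw_vech_pos, of "\<lambda>q. \<bar>x q\<bar>"] by (simp add: case_prod_unfold)
  also have "\<dots> = (\<Sum>(r, c)\<in>lower_tri n. \<bar>Z r c\<bar>)"
    using assms by (intro sum.cong refl) (auto simp: is_vech_def lower_tri_def)
  also have "\<dots> \<le> (\<Sum>(r, c)\<in>{..<n} \<times> {..<n}. \<bar>Z r c\<bar>)"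
    by (intro sum_mono2) (auto simp: lower_tri_def)
  also have "\<dots> = l1_mat n Z"
    by (simp add: l1_mat_def sum.cartesian_product)
  finally show ?thesis .
qed

lemma abs_entry_le_enorm:
  assumes "is_vech n x Z" "sym_mat n Z" "r < n" "c < n"
  shows "\<bar>Z r c\<bar> \<le> enorm (ntil n) x"
proof -
  have "vech_pos n (max r c) (min r c) < ntil n"
    using assms by (intro vech_pos_lt_ntil) auto
  then show ?thesis
    using assms by (simp add: is_vech_imp_eq_unvech unvech_def abs_le_enorm)
qed

lemma l1_mat_le_enorm:
  assumes "is_vech n x Z" "sym_mat n Z"
  shows "l1_mat n Z \<le> real (n * n) * enorm (ntil n) x"
proof -
  have "l1_mat n Z \<le> (\<Sum>r<n. \<Sum>c<n. enorm (ntil n) x)"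
    unfolding l1_mat_def using assms by (intro sum_mono abs_entry_le_enorm) auto
  then show ?thesis by simp
qed

lemma trace_le_enorm:
  assumes "is_vech n x Z" "sym_mat n Z"
  shows "(\<Sum>i<n. Z i i) \<le> real n * enorm (ntil n) x"
proof -
  have "(\<Sum>i<n. Z i i) \<le> (\<Sum>i<n. enorm (ntil n) x)"
    using assms abs_entry_le_enorm by (intro sum_mono) force
  then show ?thesis by simp
qed

lemma l1_mat_outer: "l1_mat n (outer u) \<le> real (n * n) * (enorm n u)\<^sup>2"
proof -
  have "l1_mat n (outer u) \<le> (\<Sum>r<n. \<Sum>c<n. enorm n u * enorm n u)"
    unfolding l1_mat_def outer_def abs_mult
    by (intro sum_mono mult_mono abs_le_enorm) (auto simp: enorm_def sum_nonneg)
  then show ?thesis by (simp add: power2_eq_square)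
qed

lemma enorm_vech_outer_le: "enorm (ntil n) (vech n (outer u)) \<le> real (n * n) * (enorm n u)\<^sup>2"
  using enorm_le_l1_mat[OF is_vech_vech] l1_mat_outer by (rule order_trans)

lemma l1_mat_lincomb_le:
  assumes "finite A" and "\<And>r c. r < n \<Longrightarrow> c < n \<Longrightarrow> Z r c = (\<Sum>k\<in>A. a k * Y k r c)"
  shows "l1_mat n Z \<le> (\<Sum>k\<in>A. \<bar>a k\<bar> * l1_mat n (Y k))"
proof -
  have "l1_mat n Z \<le> (\<Sum>r<n. \<Sum>c<n. \<Sum>k\<in>A. \<bar>a k\<bar> * \<bar>Y k r c\<bar>)"
    unfolding l1_mat_def using assms
    by (intro sum_mono) (auto intro: order_trans[OF sum_abs] simp: abs_mult)
  also have "\<dots> = (\<Sum>k\<in>A. \<bar>a k\<bar> * l1_mat n (Y k))"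
    unfolding l1_mat_def sum_distrib_left by (simp add: sum.swap[where B=A])
  finally show ?thesis .
qed

lemma abs_integral_mult_le:
  fixes f g :: "'a \<Rightarrow> real"
  assumes "integrable M (\<lambda>x. f x * g x)" "integrable M (\<lambda>x. f x * f x)" "integrable M (\<lambda>x. g x * g x)"
  shows "\<bar>\<integral>x. f x * g x \<partial>M\<bar> \<le> ((\<integral>x. f x * f x \<partial>M) + (\<integral>x. g x * g x \<partial>M)) / 2"
proof -
  have "\<bar>\<integral>x. f x * g x \<partial>M\<bar> \<le> (\<integral>x. \<bar>f x * g x\<bar> \<partial>M)"
    using integral_norm_bound[of M "\<lambda>x. f x * g x"] by simp
  also have "\<dots> \<le> (\<integral>x. (f x * f x + g x * g x) / 2 \<partial>M)"
  proof (rule integral_mono)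
    fix x
    have "0 \<le> (\<bar>f x\<bar> - \<bar>g x\<bar>)\<^sup>2" by simp
    then show "\<bar>f x * g x\<bar> \<le> (f x * f x + g x * g x) / 2"
      by (simp add: power2_eq_square algebra_simps abs_mult)
  qed (use assms in auto)
  also have "\<dots> = ((\<integral>x. f x * f x \<partial>M) + (\<integral>x. g x * g x \<partial>M)) / 2"
    using assms by simp
  finally show ?thesis .
qed

definition unit_vec :: "nat \<Rightarrow> rvec" where
  "unit_vec i = (\<lambda>r. if i = r then 1 else 0)"

lemma enorm_unit_vec_add_le: "\<bar>\<sigma>\<bar> = 1 \<Longrightarrow> enorm n (\<lambda>x. unit_vec i x + \<sigma> * unit_vec j x) \<le> 2"
proof -
  assume "\<bar>\<sigma>\<bar> = 1"
  have "enorm n (\<lambda>x. unit_vec i x + \<sigma> * unit_vec j x) \<le> (\<Sum>x<n. \<bar>unit_vec i x + \<sigma> * unit_vec j x\<bar>)"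
    by (rule enorm_le_sum_abs)
  also have "\<dots> \<le> (\<Sum>x<n. \<bar>unit_vec i x\<bar> + \<bar>unit_vec j x\<bar>)"
    using \<open>\<bar>\<sigma>\<bar> = 1\<close> by (intro sum_mono) (metis abs_mult abs_triangle_ineq mult_1)
  also have "\<dots> \<le> 2"
    by (simp add: sum.distrib unit_vec_def sum.If_cases)
  finally show ?thesis .
qed

text \<open>Polarization: \<open>(e\<^sub>i + e\<^sub>j)(e\<^sub>i + e\<^sub>j)\<^sup>T - (e\<^sub>i - e\<^sub>j)(e\<^sub>i - e\<^sub>j)\<^sup>T = 2 (e\<^sub>i e\<^sub>j\<^sup>T + e\<^sub>j e\<^sub>i\<^sup>T)\<close>.\<close>

lemma sym_mat_eq_sum_outer:
  assumes "sym_mat n Y" "r < n" "c < n"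
  shows "Y r c = (\<Sum>(i, j, \<sigma>)\<in>{..<n} \<times> {..<n} \<times> {1, -1}.
    \<sigma> * Y i j / 4 * outer (\<lambda>x. unit_vec i x + \<sigma> * unit_vec j x) r c)"
proof -
  have polarization: "(\<Sum>\<sigma>\<in>{1, -1::real}. \<sigma> * y / 4 * outer (\<lambda>x. unit_vec i x + \<sigma> * unit_vec j x) r c)
      = y / 2 * (unit_vec i r * unit_vec j c) + y / 2 * (unit_vec j r * unit_vec i c)" for y i j
    by (simp add: outer_def algebra_simps)
  have "(\<Sum>(i, j, \<sigma>)\<in>{..<n} \<times> {..<n} \<times> {1, -1}. \<sigma> * Y i j / 4 * outer (\<lambda>x. unit_vec i x + \<sigma> * unit_vec j x) r c)
      = (\<Sum>i<n. \<Sum>j<n. Y i j / 2 * (unit_vec i r * unit_vec j c) + Y i j / 2 * (unit_vec j r * unit_vec i c))"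
    by (simp only: sum.cartesian_product' prod.case polarization)
  also have "\<dots> = (\<Sum>i<n. unit_vec i r * (\<Sum>j<n. unit_vec j c * (Y i j / 2)))
      + (\<Sum>i<n. unit_vec i c * (\<Sum>j<n. unit_vec j r * (Y i j / 2)))"
    by (simp add: sum.distrib sum_distrib_left mult_ac)
  also have "\<dots> = Y r c / 2 + Y c r / 2"
    using assms by (simp only: unit_vec_def sum_if_eq_mult finite_lessThan lessThan_iff)
  also have "\<dots> = Y r c"
    using assms by (simp add: sym_mat_def)
  finally show ?thesis ..
qed

section \<open>Mean-square stability and stability of the expanded system\<close>

lemma param_seqs_image: "param_seqs ti (f ` S) = (\<lambda>th s. f (th s)) ` param_seqs ti S"
proof
  show "(\<lambda>th s. f (th s)) ` param_seqs ti S \<subseteq> param_seqs ti (f ` S)"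
    by (auto simp: param_seqs_def)
  show "param_seqs ti (f ` S) \<subseteq> (\<lambda>th s. f (th s)) ` param_seqs ti S"
  proof
    fix ths assume ths: "ths \<in> param_seqs ti (f ` S)"
    show "ths \<in> (\<lambda>th s. f (th s)) ` param_seqs ti S"
    proof (cases ti)
      case True
      with ths obtain c where "c \<in> S" "\<forall>t. ths t = f c" by (auto simp: param_seqs_def)
      with True show ?thesis by (auto simp: param_seqs_def image_iff intro!: exI[of _ "\<lambda>_. c"])
    next
      case False
      with ths have "\<forall>t. \<exists>c\<in>S. ths t = f c" by (auto simp: param_seqs_def)
      then obtain th where "\<forall>t. th t \<in> S \<and> ths t = f (th t)" by metis
      with False show ?thesis by (auto simp: param_seqs_def image_iff intro!: exI[of _ th])
    qed
  qed
qed

context smp_closed_loop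
begin

lemma l1_mat_moment_traj_outer_le:
  assumes th: "range th \<subseteq> S"
  shows "l1_mat n (moment_traj th (outer u) t) \<le> real n * (\<Sum>i<n. moment_traj th (outer u) t i i)"
proof -
  let ?Z = "moment_traj th (outer u) t"
  note moment = traj_second_moment[OF th, where t=t and u=u]
  have "\<bar>?Z i j\<bar> \<le> (?Z i i + ?Z j j) / 2" if "i < n" "j < n" for i j
  proof -
    let ?x = "\<lambda>vs. traj n m K u vs t"
    have "\<bar>\<integral>vs. ?x vs i * ?x vs j \<partial>param_meas th {..<t}\<bar>
        \<le> ((\<integral>vs. ?x vs i * ?x vs i \<partial>param_meas th {..<t}) + (\<integral>vs. ?x vs j * ?x vs j \<partial>param_meas th {..<t})) / 2"
      using moment that by (intro abs_integral_mult_le) auto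
    then show ?thesis using moment that by simp
  qed
  then have "l1_mat n ?Z \<le> (\<Sum>i<n. \<Sum>j<n. (?Z i i + ?Z j j) / 2)"
    unfolding l1_mat_def by (intro sum_mono) auto
  also have "\<dots> = real n * (\<Sum>i<n. ?Z i i)"
    by (simp add: add_divide_distrib sum.distrib sum_divide_distrib[symmetric] sum_distrib_left)
  finally show ?thesis .
qed

lemma l1_mat_moment_traj_le:
  assumes outer_bound: "\<And>u. l1_mat n (moment_traj th (outer u) t) \<le> B * (enorm n u)\<^sup>2"
    and "0 \<le> B" and "sym_mat n Y"
  shows "l1_mat n (moment_traj th Y t) \<le> 2 * B * l1_mat n Y"
proof -
  let ?I = "{..<n} \<times> {..<n} \<times> {1, -1::real}"
  define a where "a = (\<lambda>(i, j, \<sigma>). \<sigma> * Y i j / 4)"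
  define w where "w = (\<lambda>(i, j, \<sigma>). outer (\<lambda>x. unit_vec i x + \<sigma> * unit_vec j x))"
  have "l1_mat n (moment_traj th Y t) \<le> (\<Sum>k\<in>?I. \<bar>a k\<bar> * l1_mat n (moment_traj th (w k) t))"
    by (intro l1_mat_lincomb_le moment_traj_lincomb)
      (use \<open>sym_mat n Y\<close> sym_mat_eq_sum_outer in \<open>auto simp: a_def w_def case_prod_unfold\<close>)
  also have "\<dots> \<le> (\<Sum>k\<in>?I. \<bar>a k\<bar> * (4 * B))"
  proof (intro sum_mono mult_left_mono)
    fix k assume "k \<in> ?I"
    then obtain i j \<sigma> where k: "k = (i, j, \<sigma>)" and "\<bar>\<sigma>\<bar> = 1" by auto
    then have "(enorm n (\<lambda>x. unit_vec i x + \<sigma> * unit_vec j x))\<^sup>2 \<le> 2\<^sup>2"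
      by (intro power_mono enorm_unit_vec_add_le) (auto simp: enorm_def sum_nonneg)
    then have "B * (enorm n (\<lambda>x. unit_vec i x + \<sigma> * unit_vec j x))\<^sup>2 \<le> B * 2\<^sup>2"
      using \<open>0 \<le> B\<close> by (rule mult_left_mono)
    then show "l1_mat n (moment_traj th (w k) t) \<le> 4 * B"
      using outer_bound[of "\<lambda>x. unit_vec i x + \<sigma> * unit_vec j x"] by (simp add: k w_def)
  qed simp
  also have "\<dots> = 4 * B * (\<Sum>k\<in>?I. \<bar>a k\<bar>)"
    by (simp add: sum_distrib_left mult.commute)
  also have "(\<Sum>k\<in>?I. \<bar>a k\<bar>) = l1_mat n Y / 2"
    unfolding a_def
    by (simp only: sum.cartesian_product' prod.case) (simp add: l1_mat_def abs_mult sum_divide_distrib)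
  finally show ?thesis by simp
qed

lemma enorm_xtraj_le:
  assumes th: "range th \<subseteq> S"
    and outer_bound: "\<And>u. l1_mat n (moment_traj th (outer u) t) \<le> B * (enorm n u)\<^sup>2" and "0 \<le> B"
  shows "enorm (ntil n) (xtraj n m N Ms K x0 (\<lambda>s. phi (th s)) t) \<le> 2 * real (n * n) * B * enorm (ntil n) x0"
proof -
  have "enorm (ntil n) (xtraj n m N Ms K x0 (\<lambda>s. phi (th s)) t) \<le> l1_mat n (moment_traj th (unvech n x0) t)"
    using th sym_mat_unvech is_vech_unvech by (intro enorm_le_l1_mat is_vech_xtraj)
  also have "\<dots> \<le> 2 * B * l1_mat n (unvech n x0)"
    using outer_bound \<open>0 \<le> B\<close> sym_mat_unvech by (rule l1_mat_moment_traj_le)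
  also have "\<dots> \<le> 2 * B * (real (n * n) * enorm (ntil n) x0)"
    using \<open>0 \<le> B\<close> sym_mat_unvech is_vech_unvech by (intro mult_left_mono l1_mat_le_enorm) auto
  finally show ?thesis by (simp add: mult_ac)
qed

lemma trace_moment_traj_le:
  assumes th: "range th \<subseteq> S"
  shows "(\<Sum>i<n. moment_traj th (outer u) t i i)
    \<le> real n * enorm (ntil n) (xtraj n m N Ms K (vech n (outer u)) (\<lambda>s. phi (th s)) t)"
  using th sym_mat_outer is_vech_vech by (intro trace_le_enorm is_vech_xtraj sym_mat_moment_traj)

lemma exp_stable_rate_if_ms_stable_rate:
  assumes Seqs: "\<And>th. th \<in> Seqs \<Longrightarrow> range th \<subseteq> S" and ms: "ms_stable_rate n m K p Seqs \<beta>"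
  shows "exp_stable_rate n m N Ms K ((\<lambda>th s. phi (th s)) ` Seqs) (\<beta>\<^sup>2)"
proof -
  obtain \<alpha> where "0 < \<alpha>" "0 < \<beta>" "\<beta> < 1" and ms_bound: "\<And>u th t. th \<in> Seqs \<Longrightarrow>
      (\<integral>\<^sup>+vs. ennreal ((enorm n (traj n m K u vs t))\<^sup>2) \<partial>param_meas th {..<t}) \<le> ennreal ((\<alpha> * enorm n u * \<beta> ^ t)\<^sup>2)"
    using ms unfolding ms_stable_rate_def by blast
  have outer_bound: "l1_mat n (moment_traj th (outer u) t) \<le> real n * \<alpha>\<^sup>2 * (\<beta>\<^sup>2) ^ t * (enorm n u)\<^sup>2"
    if th: "th \<in> Seqs" for th u t
  proof -
    have "l1_mat n (moment_traj th (outer u) t) \<le> real n * (\<Sum>i<n. moment_traj th (outer u) t i i)"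
      using Seqs[OF th] by (rule l1_mat_moment_traj_outer_le)
    also have "\<dots> \<le> real n * (\<alpha> * enorm n u * \<beta> ^ t)\<^sup>2"
      using ms_bound[OF th] sq_enorm_traj_le_iff[OF Seqs[OF th]] by (intro mult_left_mono) auto
    finally show ?thesis
      by (simp add: power_mult_distrib power_mult[symmetric] mult_ac)
  qed
  show ?thesis
    unfolding exp_stable_rate_def
  proof (intro conjI exI[of _ "2 * real n ^ 3 * \<alpha>\<^sup>2"] allI impI)
    fix x0 ths t assume "ths \<in> (\<lambda>th s. phi (th s)) ` Seqs"
    then obtain th where th: "th \<in> Seqs" and ths: "ths = (\<lambda>s. phi (th s))" by blast
    have "enorm (ntil n) (xtraj n m N Ms K x0 ths t) \<le> 2 * real (n * n) * (real n * \<alpha>\<^sup>2 * (\<beta>\<^sup>2) ^ t) * enorm (ntil n) x0"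
      unfolding ths using Seqs[OF th] outer_bound[OF th] by (intro enorm_xtraj_le) auto
    then show "enorm (ntil n) (xtraj n m N Ms K x0 ths t) \<le> 2 * real n ^ 3 * \<alpha>\<^sup>2 * enorm (ntil n) x0 * (\<beta>\<^sup>2) ^ t"
      by (simp add: power3_eq_cube mult_ac)
  next
    show "0 < 2 * real n ^ 3 * \<alpha>\<^sup>2" using \<open>0 < \<alpha>\<close> n_pos by simp
    show "0 < \<beta>\<^sup>2" "\<beta>\<^sup>2 < 1" using \<open>0 < \<beta>\<close> \<open>\<beta> < 1\<close> by (simp_all add: power_less_one_iff)
  qed
qed

lemma ms_stable_rate_if_exp_stable_rate:
  assumes Seqs: "\<And>th. th \<in> Seqs \<Longrightarrow> range th \<subseteq> S" and "0 < \<beta>"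
    and exp: "exp_stable_rate n m N Ms K ((\<lambda>th s. phi (th s)) ` Seqs) (\<beta>\<^sup>2)"
  shows "ms_stable_rate n m K p Seqs \<beta>"
proof -
  obtain \<alpha> where "0 < \<alpha>" "\<beta>\<^sup>2 < 1" and exp_bound: "\<And>x0 th t. th \<in> Seqs \<Longrightarrow>
      enorm (ntil n) (xtraj n m N Ms K x0 (\<lambda>s. phi (th s)) t) \<le> \<alpha> * enorm (ntil n) x0 * (\<beta>\<^sup>2) ^ t"
    using exp unfolding exp_stable_rate_def by blast
  have trace_bound: "(\<Sum>i<n. moment_traj th (outer u) t i i) \<le> (sqrt (real n ^ 3 * \<alpha>) * enorm n u * \<beta> ^ t)\<^sup>2"
    if th: "th \<in> Seqs" for th u t
  proof -
    have "(\<Sum>i<n. moment_traj th (outer u) t i i)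
        \<le> real n * enorm (ntil n) (xtraj n m N Ms K (vech n (outer u)) (\<lambda>s. phi (th s)) t)"
      using Seqs[OF th] by (rule trace_moment_traj_le)
    also have "\<dots> \<le> real n * (\<alpha> * enorm (ntil n) (vech n (outer u)) * (\<beta>\<^sup>2) ^ t)"
      using exp_bound[OF th] by (intro mult_left_mono) auto
    also have "\<dots> \<le> real n * (\<alpha> * (real (n * n) * (enorm n u)\<^sup>2) * (\<beta>\<^sup>2) ^ t)"
      using \<open>0 < \<alpha>\<close> enorm_vech_outer_le by (intro mult_left_mono mult_right_mono) auto
    also have "\<dots> = (sqrt (real n ^ 3 * \<alpha>) * enorm n u * \<beta> ^ t)\<^sup>2"
      using \<open>0 < \<alpha>\<close> by (simp add: power_mult_distrib power_mult[symmetric] power3_eq_cube mult_ac)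
    finally show ?thesis .
  qed
  show ?thesis
    unfolding ms_stable_rate_def
  proof (intro conjI exI[of _ "sqrt (real n ^ 3 * \<alpha>)"] allI impI)
    show "0 < \<beta>" by fact
    show "\<beta> < 1" using \<open>0 < \<beta>\<close> \<open>\<beta>\<^sup>2 < 1\<close> by (simp add: power_less_one_iff)
    show "0 < sqrt (real n ^ 3 * \<alpha>)" using \<open>0 < \<alpha>\<close> n_pos by simp
    fix x0 th t assume "th \<in> Seqs"
    then show "(\<integral>\<^sup>+vs. ennreal ((enorm n (traj n m K x0 vs t))\<^sup>2) \<partial>param_meas th {..<t})
        \<le> ennreal ((sqrt (real n ^ 3 * \<alpha>) * enorm n x0 * \<beta> ^ t)\<^sup>2)"
      using trace_bound sq_enorm_traj_le_iff[OF Seqs] by blast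
  qed
qed

end

theorem theorem3:
  fixes n m N :: nat
    and S :: "(real ^ 'd) set"
    and p :: "real ^ 'd \<Rightarrow> (nat \<Rightarrow> real) \<Rightarrow> real"
    and phi :: "real ^ 'd \<Rightarrow> nat \<Rightarrow> real"
    and Ms :: "nat \<Rightarrow> nat \<Rightarrow> nat \<Rightarrow> real"
    and K :: "nat \<Rightarrow> nat \<Rightarrow> real"
    and ti :: bool
    and \<beta> :: real
  assumes "0 < n" "0 < m" "0 < N"
    and dens: "\<forall>th\<in>S. (\<forall>v. 0 \<le> p th v) \<and> p th \<in> borel_measurable (LebR (n * (n + m)))
                  \<and> prob_space (vdist n m p th)"
    and smp: "is_SMP n m S p N Ms phi"
    and "0 < \<beta>" "\<beta> < 1"
  shows "ms_stable_rate n m K p (param_seqs ti S) \<beta> \<longleftrightarrow>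
         exp_stable_rate n m N Ms K (param_seqs ti (phi ` S)) (\<beta>\<^sup>2)"
proof -
  interpret smp_closed_loop n m N S p phi Ms K
    using assms(1,2) smp dens by (intro smp_closed_loop.intro) auto
  have S_valued: "\<And>th. th \<in> param_seqs ti S \<Longrightarrow> range th \<subseteq> S"
    by (auto simp: param_seqs_def split: if_splits)
  show ?thesis
    unfolding param_seqs_image
  proof
    show "exp_stable_rate n m N Ms K ((\<lambda>th s. phi (th s)) ` param_seqs ti S) (\<beta>\<^sup>2)"
      if "ms_stable_rate n m K p (param_seqs ti S) \<beta>"
      using S_valued that by (rule exp_stable_rate_if_ms_stable_rate)
    show "ms_stable_rate n m K p (param_seqs ti S) \<beta>"
      if "exp_stable_rate n m N Ms K ((\<lambda>th s. phi (th s)) ` param_seqs ti S) (\<beta>\<^sup>2)"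
      using S_valued \<open>0 < \<beta>\<close> that by (rule ms_stable_rate_if_exp_stable_rate)
  qed
qed

end
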